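(* Let $N\ge 3$ be an integer, let $\Delta\theta^*=2\pi/N$, and let $P\neq 0$ be a real constant. Let $(\theta_k)_{k\ge1}$ and $(\omega_k)_{k\ge1}$ be real sequences with $\omega_k>0$ for all $k$, satisfying for every $k\ge 1$ $$\theta_{k+1}=\theta_k+\Delta\theta^*,\qquad \omega_{k+1}-\omega_k=P\sin\theta_k\left[\frac{1}{\omega_k}+\frac{1}{\omega_{k+1}}\right],$$ and the assumption $\omega_k^2>|P|$ for every $k\ge1$. If there exists an index $k_0$ with $\theta_{k_0} \bmod 2\pi\in\{0,\Delta\theta^*/2\}$, then the solution is periodic with period $N$: for every $k\ge k_0$ (indeed for every $k\ge1$), $\theta_{k+N}\equiv\theta_k \pmod{2\pi}$ and $\omega_{k+N}=\omega_k$.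
   Context: This is the "discrete zero dynamics" of a devil-stick with parameter $\phi=\pm\pi/2$; in the paper $P=\pm\frac{g(\Delta\theta^* )^2}{2R\sin(\Delta\theta^* )}$ (sign $+$ for $\phi=-\pi/2$, $-$ for $\phi=\pi/2$) with constants $g,R>0$. The hypothesis $\omega_k^2>|P|$ for all $k$ is the paper's Assumption 1. *)

theory Defs
  imports Complex_Main
begin

end

theory Submission
  imports Defs
begin

(* Write the recurrence as y - x = c (1/x + 1/y) with |c| = |P sin \<theta>| \<le> r\<^sup>2 and all
   values above r = sqrt |P|.  Then each step determines y from x uniquely, and
   y increases strictly with x; stepping backwards is the same recurrence with -c.
   Hence the N-step map T of the periodic coefficients is strictly increasing.  If
   \<theta>(k0) is 0 or \<Delta>\<theta>/2, the coefficients are antisymmetric about a point one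
   period later, so the solution there runs back along itself: T(T(\<omega>)) = \<omega>.
   An increasing map with a point of period two fixes it, and uniqueness of steps
   spreads T(\<omega>) = \<omega> from k0 to every index. *)

definition trapezoid_step :: "real \<Rightarrow> real \<Rightarrow> real \<Rightarrow> bool" where
  "trapezoid_step c x y \<longleftrightarrow> y - x = c * (1 / x + 1 / y)"

lemma trapezoid_step_flip: "trapezoid_step c x y \<longleftrightarrow> trapezoid_step (- c) y x"
  unfolding trapezoid_step_def by (auto simp: algebra_simps)

lemma trapezoid_step_zero: "trapezoid_step 0 x y \<longleftrightarrow> y = x"
  unfolding trapezoid_step_def by simp

lemma trapezoid_step_unique:
  assumes "trapezoid_step c x y" "trapezoid_step c x y'" "\<bar>c\<bar> < y * y'"
  shows "y = y'"
proof -
  have "y \<noteq> 0" "y' \<noteq> 0" "y * y' + c \<noteq> 0" using assms(3) by auto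
  have "y - y' = c / y - c / y'"
    using assms(1,2) unfolding trapezoid_step_def by (simp add: algebra_simps)
  then have "(y - y') * (y * y') = c * (y' - y)"
    using \<open>y \<noteq> 0\<close> \<open>y' \<noteq> 0\<close> by (simp add: field_simps)
  then have "(y - y') * (y * y' + c) = 0" by (simp add: algebra_simps)
  with \<open>y * y' + c \<noteq> 0\<close> show ?thesis by simp
qed

lemma trapezoid_step_strict_mono:
  assumes "trapezoid_step c x y" "trapezoid_step c x' y'" "x < x'"
    and "\<bar>c\<bar> < x * x'" "\<bar>c\<bar> < y * y'"
  shows "y < y'"
proof -
  have "x * x' > 0" "y * y' > 0" using assms(4,5) by linarith+
  then have "x \<noteq> 0" "x' \<noteq> 0" "y \<noteq> 0" "y' \<noteq> 0" by auto
  have "(x' + c / x') - (x + c / x) = (x' - x) * (x * x' - c) / (x * x')"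
    using \<open>x \<noteq> 0\<close> \<open>x' \<noteq> 0\<close> by (simp add: field_simps)
  also have "\<dots> > 0"
    using assms(3,4) \<open>x * x' > 0\<close> by (simp add: divide_pos_pos)
  also have "(x' + c / x') - (x + c / x) = (y' - c / y') - (y - c / y)"
    using assms(1,2) \<open>x * x' > 0\<close> \<open>y * y' > 0\<close>
    unfolding trapezoid_step_def by (simp add: field_simps)
  also have "\<dots> = (y' - y) * (y * y' + c) / (y * y')"
    using \<open>y \<noteq> 0\<close> \<open>y' \<noteq> 0\<close> by (simp add: field_simps)
  finally have "(y' - y) * (y * y' + c) > 0"
    using \<open>y * y' > 0\<close> by (simp add: zero_less_divide_iff)
  moreover have "y * y' + c > 0" using assms(5) by linarith
  ultimately show ?thesis by (simp add: zero_less_mult_iff)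
qed

definition trapezoid_solution :: "real \<Rightarrow> (nat \<Rightarrow> real) \<Rightarrow> (nat \<Rightarrow> real) \<Rightarrow> bool" where
  "trapezoid_solution r c a \<longleftrightarrow>
     0 \<le> r \<and> (\<forall>j. r < a j \<and> \<bar>c j\<bar> \<le> r\<^sup>2 \<and> trapezoid_step (c j) (a j) (a (Suc j)))"

lemma trapezoid_solutionD:
  assumes "trapezoid_solution r c a"
  shows "trapezoid_step (c j) (a j) (a (Suc j))"
  using assms unfolding trapezoid_solution_def by blast

lemma trapezoid_solution_coeff_bound:
  assumes "trapezoid_solution r c a" "trapezoid_solution r c' b"
  shows "\<bar>c i\<bar> < a j * b k"
proof -
  have "0 \<le> r" "r < a j" "r < b k" "\<bar>c i\<bar> \<le> r\<^sup>2"
    using assms unfolding trapezoid_solution_def by auto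
  then have "r * r < a j * b k" by (intro mult_strict_mono) auto
  with \<open>\<bar>c i\<bar> \<le> r\<^sup>2\<close> show ?thesis by (simp add: power2_eq_square)
qed

lemma trapezoid_solution_shift:
  "trapezoid_solution r c a \<Longrightarrow> trapezoid_solution r (\<lambda>j. c (n + j)) (\<lambda>j. a (n + j))"
  unfolding trapezoid_solution_def by simp

lemma trapezoid_solutions_eq_Suc_iff:
  assumes a: "trapezoid_solution r c a" and b: "trapezoid_solution r c b"
  shows "a (Suc j) = b (Suc j) \<longleftrightarrow> a j = b j"
proof
  assume "a (Suc j) = b (Suc j)"
  then have "trapezoid_step (- c j) (a (Suc j)) (b j)"
    using trapezoid_solutionD[OF b] trapezoid_step_flip by simp
  moreover have "trapezoid_step (- c j) (a (Suc j)) (a j)"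
    using trapezoid_solutionD[OF a] trapezoid_step_flip by simp
  ultimately show "a j = b j"
    using trapezoid_step_unique trapezoid_solution_coeff_bound[OF a b] by (metis abs_minus_cancel)
next
  assume "a j = b j"
  then have "trapezoid_step (c j) (a j) (b (Suc j))"
    using trapezoid_solutionD[OF b] by simp
  then show "a (Suc j) = b (Suc j)"
    using trapezoid_step_unique trapezoid_solutionD[OF a] trapezoid_solution_coeff_bound[OF a b]
    by blast
qed

lemma trapezoid_solutions_eq_iff:
  assumes "trapezoid_solution r c a" "trapezoid_solution r c b"
  shows "a j = b j \<longleftrightarrow> a k = b k"
proof -
  have "a j = b j \<longleftrightarrow> a 0 = b 0" for j
    by (induction j) (simp_all add: trapezoid_solutions_eq_Suc_iff[OF assms])
  from this[of j] this[of k] show ?thesis by simp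
qed

lemma trapezoid_solutions_less:
  assumes a: "trapezoid_solution r c a" and b: "trapezoid_solution r c b" and "a 0 < b 0"
  shows "a j < b j"
proof (induction j)
  case 0
  then show ?case using \<open>a 0 < b 0\<close> by simp
next
  case (Suc j)
  show ?case
    using trapezoid_step_strict_mono[OF trapezoid_solutionD[OF a] trapezoid_solutionD[OF b] Suc]
      trapezoid_solution_coeff_bound[OF a b] by blast
qed

(* Coefficients antisymmetric about M - 1/2 make the solution symmetric about M;
   a gap of s zero-coefficient steps in the middle is allowed. *)
lemma trapezoid_solution_mirror:
  assumes a: "trapezoid_solution r c a" and "a (M + s) = a M"
    and c_antisym: "\<And>j. j < M \<Longrightarrow> c (M + s + j) = - c (M - 1 - j)"
  shows "j \<le> M \<Longrightarrow> a (M + s + j) = a (M - j)"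
proof (induction j)
  case 0
  then show ?case using \<open>a (M + s) = a M\<close> by simp
next
  case (Suc j)
  then have "j < M" and IH: "a (M + s + j) = a (M - j)" by simp_all
  have "trapezoid_step (c (M - 1 - j)) (a (M - 1 - j)) (a (M - j))"
    using trapezoid_solutionD[OF a, of "M - 1 - j"] \<open>j < M\<close> by (simp add: Suc_diff_Suc)
  then have "trapezoid_step (c (M + s + j)) (a (M + s + j)) (a (M - Suc j))"
    using trapezoid_step_flip c_antisym[OF \<open>j < M\<close>] IH by simp
  then show ?case
    using trapezoid_step_unique trapezoid_solutionD[OF a, of "M + s + j"]
      trapezoid_solution_coeff_bound[OF a a] by fastforce
qed

lemma trapezoid_solution_period_of_double_period:
  assumes a: "trapezoid_solution r c a" and c_per: "\<And>j. c (N + j) = c j"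
    and "a (2 * N) = a 0"
  shows "a N = a 0"
proof -
  have b: "trapezoid_solution r c (\<lambda>j. a (N + j))"
    using trapezoid_solution_shift[OF a, of N] c_per by simp
  have "\<not> a 0 < a N"
    using trapezoid_solutions_less[OF a b, of N] \<open>a (2 * N) = a 0\<close> by (auto simp: mult_2)
  moreover have "\<not> a N < a 0"
    using trapezoid_solutions_less[OF b a, of N] \<open>a (2 * N) = a 0\<close> by (auto simp: mult_2)
  ultimately show ?thesis by simp
qed

lemma trapezoid_solution_periodic:
  assumes a: "trapezoid_solution r c a" and c_per: "\<And>j. c (N + j) = c j"
    and "a (N + n) = a n"
  shows "a (N + j) = a j"
proof -
  have "trapezoid_solution r c (\<lambda>j. a (N + j))"
    using trapezoid_solution_shift[OF a, of N] c_per by simp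
  with \<open>a (N + n) = a n\<close> show ?thesis
    using trapezoid_solutions_eq_iff[OF a] by metis
qed

lemma trapezoid_solution_period_of_antisymmetry:
  assumes a: "trapezoid_solution r c a" and c_per: "\<And>j. c (N + j) = c j"
    and s: "s = 0 \<or> (s = 1 \<and> c 0 = 0)"
    and c_antisym: "\<And>j. j < N \<Longrightarrow> c (N + s + j) = - c (N - 1 - j)"
  shows "a N = a 0"
proof -
  have c_per_mult: "c (i * N) = c 0" for i
    by (induction i) (simp_all add: add.commute c_per)
  have zero_step: "a (i * N + s) = a (i * N)" for i
    using s trapezoid_solutionD[OF a, of "i * N"] c_per_mult[of i] by (auto simp: trapezoid_step_zero)
  have "a (N + s + N) = a (N - N)"
    using trapezoid_solution_mirror[OF a _ c_antisym] zero_step[of 1] by simp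
  moreover have "N + s + N = 2 * N + s" by simp
  ultimately have "a (2 * N) = a 0"
    using zero_step[of 2] by simp
  then show ?thesis
    using trapezoid_solution_period_of_double_period[OF a c_per] by blast
qed

lemma trapezoid_solution_sine_period:
  assumes a: "trapezoid_solution r (\<lambda>j. P * sin (t0 + real j * D)) a"
    and ND: "real N * D = 2 * pi" and t0: "t0 = 0 \<or> t0 = D / 2"
  shows "a N = a 0"
proof -
  define c where "c j = P * sin (t0 + real j * D)" for j
  \<comment> \<open>For t0 = 0 the mirror point lies between two equal values, as c 0 = 0.\<close>
  define s :: nat where "s = (if t0 = 0 then 1 else 0)"
  have shift_N: "t0 + real (N + j) * D = (t0 + real j * D) + 2 * pi" for j
    using ND by (simp add: algebra_simps)
  have c_per: "c (N + j) = c j" for j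
    unfolding c_def shift_N by simp
  have "s = 0 \<or> (s = 1 \<and> c 0 = 0)"
    unfolding s_def c_def by simp
  moreover have "c (N + s + j) = - c (N - 1 - j)" if "j < N" for j
  proof -
    have "t0 + real (N - 1 - j) * D = 2 * pi - (t0 + real (s + j) * D)"
      using t0 ND that by (auto simp: s_def of_nat_diff algebra_simps)
    then have "c (N - 1 - j) = - c (s + j)"
      unfolding c_def by (metis sin_2pi_minus mult_minus_right)
    then show ?thesis
      using c_per[of "s + j"] by (simp add: add.assoc)
  qed
  ultimately show ?thesis
    using trapezoid_solution_period_of_antisymmetry[of r c a] a c_per unfolding c_def by blast
qed

lemma sin_add_2pi_int: "sin (2 * pi * real_of_int m + x) = sin x"
  by (simp add: sin_add)

lemma arithmetic_progression:
  assumes "\<And>k. k \<ge> 1 \<Longrightarrow> \<theta> (k + 1) = \<theta> k + D" and "k \<ge> 1"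
  shows "\<theta> (k + j) = \<theta> k + real j * D"
  by (induction j) (use assms in \<open>simp_all add: algebra_simps\<close>)

theorem theorem1:
  fixes N :: nat and P :: real and \<theta> \<omega> :: "nat \<Rightarrow> real"
  assumes N3: "N \<ge> 3"
    and P0: "P \<noteq> 0"
    and pos: "\<And>k. k \<ge> 1 \<Longrightarrow> \<omega> k > 0"
    and rec_theta: "\<And>k. k \<ge> 1 \<Longrightarrow> \<theta> (k + 1) = \<theta> k + 2 * pi / real N"
    and rec_omega: "\<And>k. k \<ge> 1 \<Longrightarrow>
           \<omega> (k + 1) - \<omega> k = P * sin (\<theta> k) * (1 / \<omega> k + 1 / \<omega> (k + 1))"
    and assm1: "\<And>k. k \<ge> 1 \<Longrightarrow> (\<omega> k)\<^sup>2 > \<bar>P\<bar>"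
    and k0: "k0 \<ge> 1"
    and sym: "\<exists>m::int. \<theta> k0 = 2 * pi * real_of_int m
                     \<or> \<theta> k0 = 2 * pi * real_of_int m + (2 * pi / real N) / 2"
  shows "\<forall>k\<ge>1. (\<exists>m::int. \<theta> (k + N) = \<theta> k + 2 * pi * real_of_int m)
                 \<and> \<omega> (k + N) = \<omega> k"
proof -
  define D where "D = 2 * pi / real N"
  have ND: "real N * D = 2 * pi" using N3 by (simp add: D_def)
  have theta: "\<theta> (k + j) = \<theta> k + real j * D" if "k \<ge> 1" for k j
    using arithmetic_progression[of \<theta> D, OF _ that] rec_theta unfolding D_def by blast
  have theta_N: "\<theta> (k + N) = \<theta> k + 2 * pi" if "k \<ge> 1" for k
    using theta[OF that, of N] ND by (simp add: mult.commute)
  have sol: "trapezoid_solution (sqrt \<bar>P\<bar>) (\<lambda>j. P * sin (\<theta> (Suc j))) (\<lambda>j. \<omega> (Suc j))"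
    unfolding trapezoid_solution_def trapezoid_step_def
    using pos assm1 rec_omega by (auto simp: real_less_lsqrt less_imp_le abs_mult mult_left_le)
  obtain m :: int and t0 where t0: "t0 = 0 \<or> t0 = D / 2" and "\<theta> k0 = 2 * pi * m + t0"
    using sym unfolding D_def by (metis add.right_neutral)
  then have "trapezoid_solution (sqrt \<bar>P\<bar>) (\<lambda>j. P * sin (t0 + real j * D)) (\<lambda>j. \<omega> (k0 + j))"
    using trapezoid_solution_shift[OF sol, of "k0 - 1"] k0 theta[OF k0]
    by (simp add: sin_add_2pi_int add.assoc)
  from trapezoid_solution_sine_period[OF this ND t0] have "\<omega> (k0 + N) = \<omega> k0"
    by simp
  moreover have "P * sin (\<theta> (Suc (N + j))) = P * sin (\<theta> (Suc j))" for j
    using theta_N[of "Suc j"] by (simp add: add.commute)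
  ultimately have omega_N: "\<omega> (Suc (N + j)) = \<omega> (Suc j)" for j
    using trapezoid_solution_periodic[OF sol, of N "k0 - 1" j] k0 by (simp add: add.commute)
  show ?thesis
  proof (intro allI impI conjI)
    fix k :: nat assume "k \<ge> 1"
    show "\<exists>m::int. \<theta> (k + N) = \<theta> k + 2 * pi * real_of_int m"
      using theta_N[OF \<open>k \<ge> 1\<close>] by (intro exI[of _ 1]) simp
    show "\<omega> (k + N) = \<omega> k"
      using omega_N[of "k - 1"] \<open>k \<ge> 1\<close> by (simp add: add.commute)
  qed
qed

end
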